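(* Consider the data-driven robust unit commitment setting described in the context, with $\varepsilon,\delta\in(0,1)$. Select two disjoint groups from the forecast-error data $e_1,\dots,e_N$, with realizations $e_{1}^{(1)},\dots,e_{N_1}^{(1)}$ and $e_{1}^{(2)},\dots,e_{N_2}^{(2)}$, where $N_1 + N_2 \leq N$ and $N_2 \geq \log_{1 - \varepsilon} \delta$. Let $$\mu := \frac{1}{N_1} \sum_{n = 1}^{N_1} e_n^{(1)},\qquad \Sigma := \frac{1}{N_1 - 1} \sum_{n = 1}^{N_1} ( e_n^{(1)} - \mu ) ( e_n^{(1)} - \mu )^\top,$$ and assume $\Sigma$ is invertible. Define $a(e) := (e - \mu)^\top \Sigma^{-1} (e - \mu)$. For a positive integer $K$ let $$n_K^* := \min \Big\{ n \in \mathbb{N} ~\Big|~ \sum_{m = 0}^{n - 1} \binom{K}{m} (1 - \varepsilon)^m \varepsilon^{K - m} \geq 1 - \delta \Big\}.$$ Let $\alpha$ be the $n_{N_2}^*$-th smallest value among $a(e_1^{(2)}), \dots, a(e_{N_2}^{(2)})$, and define $\mathcal{E} := \{ e ~|~ (e - \mu)^\top \Sigma^{-1} (e - \mu) \leq \alpha \}$. Then $$\mathbb{P}^N\big[\Pr[e \in \mathcal{E}] \geq 1 - \varepsilon\big] \geq 1 - \delta .$$ Moreover, if $\mathcal{U}_1 := \{ u \in \mathcal{U}_0 ~|~ u - \hat{u} \in \mathcal{E} \}$ is used as the uncertainty set $\mathcal U$ in the robust problem defining $O_{\mathcal U}$ and $x_0$ is an optimal solution of that problem, then $$\mathbb{P}^N[O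 \leq O_{x_0} \leq O_{\mathcal{U}_1}] \geq 1 - \delta.$$
   Context: The uncertain load vector is $u=\hat u+e$, where $\hat u$ is a fixed prediction and the forecast error $e$ is a continuous random vector with distribution $\mathbb P$. The historical forecast errors $e_1,\dots,e_N$ are i.i.d. with distribution $\mathbb P$ (independent of the new error $e$); $\mathbb P^N$ denotes their joint distribution (so sets built from the data are random), and $\Pr$ refers to the distribution of the new $e$ (equivalently $u$). $\mathcal U_0=\{u\mid \underline U\le u\le \overline U\}$ is a set with $\Pr[u\in\mathcal U_0]=1$. The robust unit commitment problem has the compact form: for an uncertainty set $\mathcal U$, $$O_{\mathcal{U}} := \min_{x \in \mathcal{X}} \Big\{ C^\top x + \max_{u \in \mathcal{U}} \min_{y:\, A y \geq B x + D u + E} F^\top y \Big\},$$ where $\mathcal X$ is the (mixed-integer linear) pre-dispatch feasible set of unit commitment and $A,B,C,D,E,F$ are given coefficient matrices/vectors; write $f(x)=C^\top x$, $h(y)=F^\top y$, $\mathcal Y(x,u)=\{y: Ay\ge Bx+Du+E\}$, with minimum over an empty set equal to $+\infty$. The chance-constrained problem has value $O := \min_{x \in \mathcal{X}, \eta}\{ f(x) + \eta : \Pr[ \min_{y \in \mathcal{Y}(x, u)} h(y) \leq \eta ] \geq 1 - \varepsilon\}$, and for $x\in\mathcal X$, $O_x := f(x) + \min \{ \eta \mid \Pr [ \min_{y \in \mathcal{Y}(x, u)} h(y) \leq \eta ] \geq 1 - \varepsilon \}$. Optimal solutions of these problems are assumed to exist. *)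

theory Defs
  imports "HOL-Probability.Probability"
begin

definition smean :: "(nat \<Rightarrow> real^'n) \<Rightarrow> nat set \<Rightarrow> real^'n" where
  "smean \<omega> I = (1 / real (card I)) *\<^sub>R (\<Sum>i\<in>I. \<omega> i)"

definition outer :: "real^'n \<Rightarrow> real^'n \<Rightarrow> real^'n^'n" where
  "outer x y = (\<chi> i j. x $ i * y $ j)"

definition scov :: "(nat \<Rightarrow> real^'n) \<Rightarrow> nat set \<Rightarrow> real^'n^'n" where
  "scov \<omega> I = (1 / (real (card I) - 1)) *\<^sub>R
     (\<Sum>i\<in>I. outer (\<omega> i - smean \<omega> I) (\<omega> i - smean \<omega> I))"

definition mdist :: "real^'n \<Rightarrow> real^'n^'n \<Rightarrow> real^'n \<Rightarrow> real" where
  "mdist \<mu> \<Sigma> e = (e - \<mu>) \<bullet> (matrix_inv \<Sigma> *v (e - \<mu>))"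

definition nstar :: "nat \<Rightarrow> real \<Rightarrow> real \<Rightarrow> nat" where
  "nstar K \<epsilon> \<delta> = (LEAST n. (\<Sum>m<n. real (K choose m) * (1 - \<epsilon>) ^ m * \<epsilon> ^ (K - m)) \<ge> 1 - \<delta>)"

text \<open>alpha: the n*_{N2}-th smallest value among a(e_i), i in I2 (1-based rank).\<close>
definition alpha_thr :: "(nat \<Rightarrow> real^'n) \<Rightarrow> nat set \<Rightarrow> nat set \<Rightarrow> real \<Rightarrow> real \<Rightarrow> real" where
  "alpha_thr \<omega> I1 I2 \<epsilon> \<delta> =
     sort (map (\<lambda>i. mdist (smean \<omega> I1) (scov \<omega> I1) (\<omega> i)) (sorted_list_of_set I2))
       ! (nstar (card I2) \<epsilon> \<delta> - 1)"

definition Eset :: "(nat \<Rightarrow> real^'n) \<Rightarrow> nat set \<Rightarrow> nat set \<Rightarrow> real \<Rightarrow> real \<Rightarrow> (real^'n) set" where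
  "Eset \<omega> I1 I2 \<epsilon> \<delta> =
     {e. mdist (smean \<omega> I1) (scov \<omega> I1) e \<le> alpha_thr \<omega> I1 I2 \<epsilon> \<delta>}"

definition Yset :: "real^'m^'r \<Rightarrow> real^'k^'r \<Rightarrow> real^'n^'r \<Rightarrow> real^'r
    \<Rightarrow> real^'k \<Rightarrow> real^'n \<Rightarrow> (real^'m) set" where
  "Yset A B D E x u = {y. B *v x + D *v u + E \<le> A *v y}"

text \<open>min_{y in Y(x,u)} F^T y, with the minimum over the empty set equal to +infinity.\<close>
definition Qval :: "real^'m^'r \<Rightarrow> real^'k^'r \<Rightarrow> real^'n^'r \<Rightarrow> real^'r \<Rightarrow> real^'m
    \<Rightarrow> real^'k \<Rightarrow> real^'n \<Rightarrow> ereal" where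
  "Qval A B D E F x u = (INF y\<in>Yset A B D E x u. ereal (F \<bullet> y))"

definition robval :: "real^'m^'r \<Rightarrow> real^'k^'r \<Rightarrow> real^'k \<Rightarrow> real^'n^'r \<Rightarrow> real^'r
    \<Rightarrow> real^'m \<Rightarrow> (real^'n) set \<Rightarrow> real^'k \<Rightarrow> ereal" where
  "robval A B C D E F U x = ereal (C \<bullet> x) + (SUP u\<in>U. Qval A B D E F x u)"

definition O_rob :: "(real^'k) set \<Rightarrow> real^'m^'r \<Rightarrow> real^'k^'r \<Rightarrow> real^'k \<Rightarrow> real^'n^'r
    \<Rightarrow> real^'r \<Rightarrow> real^'m \<Rightarrow> (real^'n) set \<Rightarrow> ereal" where
  "O_rob X A B C D E F U = (INF x\<in>X. robval A B C D E F U x)"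

definition O_x :: "(real^'n) measure \<Rightarrow> real^'n \<Rightarrow> real^'m^'r \<Rightarrow> real^'k^'r \<Rightarrow> real^'k
    \<Rightarrow> real^'n^'r \<Rightarrow> real^'r \<Rightarrow> real^'m \<Rightarrow> real \<Rightarrow> real^'k \<Rightarrow> ereal" where
  "O_x P uhat A B C D E F \<epsilon> x =
     ereal (C \<bullet> x) + (INF \<eta>\<in>{\<eta>::real. measure P {e \<in> space P. Qval A B D E F x (uhat + e) \<le> ereal \<eta>}
                                   \<ge> 1 - \<epsilon>}. ereal \<eta>)"

definition O_cc :: "(real^'n) measure \<Rightarrow> real^'n \<Rightarrow> (real^'k) set \<Rightarrow> real^'m^'r \<Rightarrow> real^'k^'r
    \<Rightarrow> real^'k \<Rightarrow> real^'n^'r \<Rightarrow> real^'r \<Rightarrow> real^'m \<Rightarrow> real \<Rightarrow> ereal" where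
  "O_cc P uhat X A B C D E F \<epsilon> =
     Inf {ereal (C \<bullet> x + \<eta>) | x \<eta>. x \<in> X \<and>
            measure P {e \<in> space P. Qval A B D E F x (uhat + e) \<le> ereal \<eta>} \<ge> 1 - \<epsilon>}"

text \<open>Inner probability statement: the event S has (inner) probability at least p.\<close>
definition prob_atleast :: "'a measure \<Rightarrow> 'a set \<Rightarrow> real \<Rightarrow> bool" where
  "prob_atleast M S p \<longleftrightarrow> (\<exists>A\<in>sets M. A \<subseteq> S \<and> measure M A \<ge> p)"

end

theory Submission
  imports Defs
begin

text \<open>Condition on the coordinates outside the second group: this fixes the Mahalanobis score
  a(e) built from the first group. A calibration point e_i is a failure when
  P[a \<le> a(e_i)] < 1 - epsilon; by the probability integral transform this happens with probability
  at most 1 - epsilon, independently for the N2 calibration points, so at least n* failures occur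
  with probability at most 1 - P[Bin(N2, 1 - epsilon) < n*] \<le> delta. On the complementary event
  the n*-th smallest score alpha satisfies P[a \<le> alpha] \<ge> 1 - epsilon, for otherwise the n*
  calibration points with score at most alpha would all be failures.
  The second claim is deterministic on that event: the worst-case second-stage cost over U1 is a
  feasible level eta of the chance constraint at x0, and x0 is feasible for the chance-constrained
  problem.\<close>

section \<open>Measurability of the Mahalanobis score\<close>

lemma borel_measurable_vec_nth:
  fixes f :: "'a \<Rightarrow> 'b::euclidean_space^'n"
  assumes "f \<in> borel_measurable M"
  shows "(\<lambda>x. f x $ i) \<in> borel_measurable M"
proof -
  have "(\<lambda>y::'b^'n. y $ i) \<in> borel_measurable borel"
    by (intro borel_measurable_continuous_onI continuous_on_component continuous_on_id)
  from measurable_compose[OF assms this] show ?thesis .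
qed

lemma borel_measurable_vec_lambda:
  fixes f :: "'n::finite \<Rightarrow> 'a \<Rightarrow> 'b::euclidean_space"
  assumes "\<And>i. f i \<in> borel_measurable M"
  shows "(\<lambda>x. \<chi> i. f i x) \<in> borel_measurable M"
proof (subst borel_measurable_euclidean_space, intro ballI)
  fix b :: "'b^'n" assume "b \<in> Basis"
  then obtain i u where "b = axis i u" by (auto simp: Basis_vec_def)
  then have "(\<lambda>x. (\<chi> i. f i x) \<bullet> b) = (\<lambda>x. f i x \<bullet> u)"
    by (simp add: inner_axis)
  then show "(\<lambda>x. (\<chi> i. f i x) \<bullet> b) \<in> borel_measurable M"
    by (simp add: borel_measurable_inner assms)
qed

lemma borel_measurable_det:
  fixes A :: "'a \<Rightarrow> real^'n^'n"
  assumes "A \<in> borel_measurable M"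
  shows "(\<lambda>x. det (A x)) \<in> borel_measurable M"
  unfolding det_def
  by (intro borel_measurable_sum borel_measurable_times borel_measurable_const
      borel_measurable_prod borel_measurable_vec_nth assms)

lemma matrix_inv_nth_cramer:
  fixes A :: "real^'n^'n"
  assumes "det A \<noteq> 0"
  shows "matrix_inv A $ i $ j = det (\<chi> a b. if b = i then axis j 1 $ a else A $ a $ b) / det A"
proof -
  have "invertible A"
    using assms by (simp add: invertible_det_nz)
  then have "A ** matrix_inv A = mat 1"
    unfolding invertible_def matrix_inv_def by (rule someI2_ex) blast
  then have "A *v (matrix_inv A *v axis j 1) = axis j 1"
    by (simp add: matrix_vector_mul_assoc)
  then have cramer_col: "matrix_inv A *v axis j 1 =
      (\<chi> k. det (\<chi> a b. if b = k then axis j 1 $ a else A $ a $ b) / det A)"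
    using cramer[OF assms] by blast
  have "matrix_inv A $ i $ j = (matrix_inv A *v axis j 1) $ i"
    by (simp add: matrix_vector_mult_def axis_def if_distrib cong: if_cong)
  also have "\<dots> = det (\<chi> a b. if b = i then axis j 1 $ a else A $ a $ b) / det A"
    by (simp only: cramer_col vec_lambda_beta)
  finally show ?thesis .
qed

lemma matrix_inv_singular:
  fixes A :: "real^'n^'n"
  assumes "det A = 0"
  shows "matrix_inv A = (SOME B. False)"
proof -
  have "\<not> (A ** B = mat 1 \<and> B ** A = mat 1)" for B
    using assms invertible_det_nz unfolding invertible_def by blast
  then show ?thesis unfolding matrix_inv_def by metis
qed

lemma borel_measurable_matrix_inv:
  fixes A :: "'a \<Rightarrow> real^'n^'n"
  assumes A: "A \<in> borel_measurable M"
  shows "(\<lambda>x. matrix_inv (A x)) \<in> borel_measurable M"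
proof -
  have "(\<lambda>x. matrix_inv (A x)) = (\<lambda>x. if det (A x) = 0 then (SOME B. False)
      else \<chi> i j. det (\<chi> a b. if b = i then axis j 1 $ a else A x $ a $ b) / det (A x))"
    by (simp add: matrix_inv_nth_cramer matrix_inv_singular vec_eq_iff fun_eq_iff)
  also have "\<dots> \<in> borel_measurable M"
  proof (rule measurable_If)
    show "{x \<in> space M. det (A x) = 0} \<in> sets M"
      using borel_measurable_det[OF A] by measurable
    have "(\<lambda>x. if b = i then axis j 1 $ a else A x $ a $ b) \<in> borel_measurable M" for i j a b
      by (cases "b = i") (simp_all add: borel_measurable_vec_nth A)
    then show "(\<lambda>x. \<chi> i j. det (\<chi> a b. if b = i then axis j 1 $ a else A x $ a $ b) / det (A x))
        \<in> borel_measurable M"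
      by (intro borel_measurable_vec_lambda borel_measurable_divide borel_measurable_det A)
  qed simp
  finally show ?thesis .
qed

lemma borel_measurable_matrix_vector_mult:
  fixes A :: "'a \<Rightarrow> real^'n^'m" and v :: "'a \<Rightarrow> real^'n"
  assumes "A \<in> borel_measurable M" "v \<in> borel_measurable M"
  shows "(\<lambda>x. A x *v v x) \<in> borel_measurable M"
  unfolding matrix_vector_mult_def
  by (intro borel_measurable_vec_lambda borel_measurable_sum borel_measurable_times
      borel_measurable_vec_nth assms)

lemma borel_measurable_outer:
  fixes u v :: "'a \<Rightarrow> real^'n"
  assumes "u \<in> borel_measurable M" "v \<in> borel_measurable M"
  shows "(\<lambda>x. outer (u x) (v x)) \<in> borel_measurable M"
  unfolding outer_def
  by (intro borel_measurable_vec_lambda borel_measurable_times borel_measurable_vec_nth assms)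

lemma borel_measurable_smean:
  assumes "\<And>i. i \<in> I \<Longrightarrow> (\<lambda>x. w x i) \<in> borel_measurable M"
  shows "(\<lambda>x. smean (w x) I) \<in> borel_measurable M"
  unfolding smean_def by (intro borel_measurable_scaleR borel_measurable_const borel_measurable_sum assms)

lemma borel_measurable_scov:
  assumes "\<And>i. i \<in> I \<Longrightarrow> (\<lambda>x. w x i) \<in> borel_measurable M"
  shows "(\<lambda>x. scov (w x) I) \<in> borel_measurable M"
  unfolding scov_def
  by (intro borel_measurable_scaleR borel_measurable_const borel_measurable_sum
      borel_measurable_outer borel_measurable_diff borel_measurable_smean assms)

lemma borel_measurable_mdist:
  fixes \<mu> e :: "'a \<Rightarrow> real^'n" and S :: "'a \<Rightarrow> real^'n^'n"
  assumes "\<mu> \<in> borel_measurable M" "S \<in> borel_measurable M" "e \<in> borel_measurable M"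
  shows "(\<lambda>x. mdist (\<mu> x) (S x) (e x)) \<in> borel_measurable M"
  unfolding mdist_def
  by (intro borel_measurable_inner borel_measurable_matrix_vector_mult borel_measurable_diff
      borel_measurable_matrix_inv assms)

section \<open>Probability integral transform\<close>

lemma down_closed_cofinal_incseq:
  fixes D :: "real set"
  assumes down: "\<And>x y. y \<in> D \<Longrightarrow> x \<le> y \<Longrightarrow> x \<in> D" and "D \<noteq> {}"
  shows "\<exists>t. incseq t \<and> (\<forall>k. t k \<in> D) \<and> (\<forall>d\<in>D. \<exists>k. d \<le> t k)"
proof (cases "\<exists>q\<in>D. \<forall>d\<in>D. d \<le> q")
  case True
  then obtain q where "q \<in> D" "\<forall>d\<in>D. d \<le> q" by blast
  then show ?thesis by (intro exI[of _ "\<lambda>_. q"]) (auto simp: incseq_def)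
next
  case no_max: False
  show ?thesis
  proof (cases "bdd_above D")
    case True
    define t where "t k = Sup D - 1 / (real k + 1)" for k
    have "incseq t"
      unfolding incseq_def t_def by (auto intro!: divide_left_mono)
    moreover have "t k \<in> D" for k
    proof -
      have "t k < Sup D" unfolding t_def by simp
      then obtain d where "d \<in> D" "t k < d"
        using less_cSup_iff[OF \<open>D \<noteq> {}\<close> True] by blast
      then show ?thesis using down by auto
    qed
    moreover have "\<exists>k. d \<le> t k" if "d \<in> D" for d
    proof -
      have "d < Sup D" using no_max that cSup_upper[OF _ True] by force
      then obtain k where "k > 0" "inverse (real k) < Sup D - d"
        using ex_inverse_of_nat_less by (metis diff_gt_0_iff_gt)
      moreover have "1 / (real k + 1) \<le> inverse (real k)"
        using \<open>k > 0\<close> by (simp add: field_simps)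
      ultimately have "d \<le> t k" unfolding t_def by simp
      then show ?thesis by blast
    qed
    ultimately show ?thesis by blast
  next
    case False
    have "real k \<in> D" for k
    proof -
      obtain d where "d \<in> D" "real k < d"
        using False unfolding bdd_above_def by (meson not_le)
      then show ?thesis using down by auto
    qed
    moreover have "incseq real" by (simp add: incseq_def)
    ultimately show ?thesis using real_arch_simple by blast
  qed
qed

lemma measure_preimage_down_closed_le:
  fixes f :: "'a \<Rightarrow> real"
  assumes "prob_space P" and f: "f \<in> borel_measurable P" and "0 \<le> c"
    and down: "\<And>x y. y \<in> D \<Longrightarrow> x \<le> y \<Longrightarrow> x \<in> D"
    and bound: "\<And>t. t \<in> D \<Longrightarrow> measure P {e \<in> space P. f e \<le> t} \<le> c"
  shows "{e \<in> space P. f e \<in> D} \<in> sets P \<and> measure P {e \<in> space P. f e \<in> D} \<le> c"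
proof (cases "D = {}")
  case True
  then show ?thesis using \<open>0 \<le> c\<close> by simp
next
  case False
  interpret prob_space P by fact
  have "\<exists>t. incseq t \<and> (\<forall>k. t k \<in> D) \<and> (\<forall>d\<in>D. \<exists>k. d \<le> t k)"
    by (rule down_closed_cofinal_incseq) (use down False in auto)
  then obtain t where t: "incseq t" "\<And>k. t k \<in> D" "\<And>d. d \<in> D \<Longrightarrow> \<exists>k. d \<le> t k"
    by blast
  let ?A = "\<lambda>k. {e \<in> space P. f e \<le> t k}"
  have A: "range ?A \<subseteq> sets P"
    using f by auto
  have Union: "{e \<in> space P. f e \<in> D} = (\<Union>k. ?A k)"
  proof (intro equalityI subsetI)
    fix e assume "e \<in> {e \<in> space P. f e \<in> D}"
    then obtain k where "e \<in> space P" "f e \<le> t k" using t(3) by blast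
    then show "e \<in> (\<Union>k. ?A k)" by blast
  next
    fix e assume "e \<in> (\<Union>k. ?A k)"
    then obtain k where "e \<in> space P" "f e \<le> t k" by blast
    then show "e \<in> {e \<in> space P. f e \<in> D}" using down[OF t(2)] by blast
  qed
  have "incseq ?A"
    using t(1) unfolding incseq_def by (auto dest: order_trans)
  then have "(\<lambda>k. measure P (?A k)) \<longlonglongrightarrow> measure P (\<Union>k. ?A k)"
    by (rule finite_Lim_measure_incseq[OF A])
  then have "measure P (\<Union>k. ?A k) \<le> c"
    by (rule LIMSEQ_le_const2) (use t(2) bound in blast)
  then show ?thesis
    unfolding Union using A by auto
qed

text \<open>No continuity of the law of f is needed for this one-sided form.\<close>
lemma measure_cdf_at_self_less_le:
  fixes f :: "'a \<Rightarrow> real"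
  assumes "prob_space P" and f: "f \<in> borel_measurable P" and "0 \<le> c"
  defines "L \<equiv> {e \<in> space P. measure P {e' \<in> space P. f e' \<le> f e} < c}"
  shows "L \<in> sets P" "measure P L \<le> c"
proof -
  interpret prob_space P by fact
  have "{e \<in> space P. f e \<in> {t. measure P {e' \<in> space P. f e' \<le> t} < c}} \<in> sets P \<and>
      measure P {e \<in> space P. f e \<in> {t. measure P {e' \<in> space P. f e' \<le> t} < c}} \<le> c"
  proof (rule measure_preimage_down_closed_le[OF assms(1) f \<open>0 \<le> c\<close>])
    fix x y assume "y \<in> {t. measure P {e' \<in> space P. f e' \<le> t} < c}" "x \<le> y"
    moreover have "measure P {e' \<in> space P. f e' \<le> x} \<le> measure P {e' \<in> space P. f e' \<le> y}"
      using \<open>x \<le> y\<close> f by (intro finite_measure_mono) auto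
    ultimately show "x \<in> {t. measure P {e' \<in> space P. f e' \<le> t} < c}" by simp
  qed simp
  then show "L \<in> sets P" "measure P L \<le> c"
    unfolding L_def by auto
qed

section \<open>Binomial tails of calibration counts\<close>

definition binomial_prob_less :: "real \<Rightarrow> nat \<Rightarrow> nat \<Rightarrow> real" where
  "binomial_prob_less p K n = (\<Sum>m<n. real (K choose m) * p ^ m * (1 - p) ^ (K - m))"

lemma binomial_prob_less_0 [simp]: "binomial_prob_less p K 0 = 0"
  by (simp add: binomial_prob_less_def)

lemma binomial_prob_less_no_trials: "binomial_prob_less p 0 (Suc n) = 1"
  by (induction n) (simp_all add: binomial_prob_less_def)

lemma binomial_prob_less_Suc_Suc:
  "binomial_prob_less p (Suc K) (Suc n) = p * binomial_prob_less p K n + (1 - p) * binomial_prob_less p K (Suc n)"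
proof (induction n)
  case 0
  then show ?case by (simp add: binomial_prob_less_def)
next
  case (Suc n)
  have Pascal: "real (Suc K choose Suc n) * p ^ Suc n * (1 - p) ^ (Suc K - Suc n) =
     p * (real (K choose n) * p ^ n * (1 - p) ^ (K - n)) +
     (1 - p) * (real (K choose Suc n) * p ^ Suc n * (1 - p) ^ (K - Suc n))"
  proof (cases "Suc n \<le> K")
    case True
    then have split: "(1 - p) ^ (K - n) = (1 - p) * (1 - p) ^ (K - Suc n)"
      by (metis Suc_diff_le diff_Suc_Suc power_Suc)
    show ?thesis
      unfolding binomial_Suc_Suc diff_Suc_Suc split of_nat_add by (simp add: algebra_simps)
  next
    case False
    then show ?thesis by (simp add: binomial_Suc_Suc algebra_simps)
  qed
  show ?case
    using Suc Pascal by (simp add: binomial_prob_less_def algebra_simps)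
qed

lemma binomial_prob_less_self: "binomial_prob_less p K K = 1 - p ^ K"
proof -
  have "binomial_prob_less p K K + real (K choose K) * p ^ K * (1 - p) ^ (K - K) =
      (\<Sum>m\<le>K. real (K choose m) * p ^ m * (1 - p) ^ (K - m))"
    unfolding binomial_prob_less_def by (simp add: lessThan_Suc_atMost[symmetric])
  also have "\<dots> = 1"
    using binomial_ring[of p "1 - p" K] by simp
  finally show ?thesis by simp
qed

lemma sets_Collect_card_ge:
  assumes "finite I" and Q: "\<And>i. i \<in> I \<Longrightarrow> {x \<in> space M. Q i x} \<in> sets M"
  shows "{x \<in> space M. n \<le> card {i \<in> I. Q i x}} \<in> sets M"
proof -
  let ?g = "\<lambda>x. \<Sum>i\<in>I. indicator {x \<in> space M. Q i x} x :: real"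
  have "?g \<in> borel_measurable M"
    by (intro borel_measurable_sum borel_measurable_indicator Q)
  then have "{x \<in> space M. real n \<le> ?g x} \<in> sets M"
    by measurable
  moreover have "real (card {i \<in> I. Q i x}) = ?g x" if "x \<in> space M" for x
    using that \<open>finite I\<close> by (simp add: indicator_def of_bool_def sum.If_cases Int_def)
  ultimately show ?thesis
    by (metis (no_types, lifting) Collect_cong of_nat_le_iff)
qed

definition hits_ge :: "'a measure \<Rightarrow> 'a set \<Rightarrow> 'i set \<Rightarrow> nat \<Rightarrow> ('i \<Rightarrow> 'a) set" where
  "hits_ge P S I n = {y \<in> space (PiM I (\<lambda>_. P)). n \<le> card {i \<in> I. y i \<in> S}}"

lemma sets_hits_ge:
  assumes "finite I" "S \<in> sets P"
  shows "hits_ge P S I n \<in> sets (PiM I (\<lambda>_. P))"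
  unfolding hits_ge_def
proof (rule sets_Collect_card_ge[OF assms(1)])
  fix i assume "i \<in> I"
  have "(\<lambda>y. y i) -` S \<inter> space (PiM I (\<lambda>_. P)) \<in> sets (PiM I (\<lambda>_. P))"
    using measurable_sets[OF measurable_component_singleton[OF \<open>i \<in> I\<close>] assms(2)] .
  then show "{y \<in> space (PiM I (\<lambda>_. P)). y i \<in> S} \<in> sets (PiM I (\<lambda>_. P))"
    by (simp add: vimage_def Int_def conj_commute)
qed

lemma indicator_hits_ge_insert:
  assumes "j \<notin> I" "x \<in> space (PiM I (\<lambda>_. P))" "y \<in> space P" "finite I"
  shows "indicator (hits_ge P S (insert j I) (Suc m)) (x(j := y)) =
    indicator S y * indicator (hits_ge P S I m) x +
    indicator (space P - S) y * (indicator (hits_ge P S I (Suc m)) x :: ennreal)"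
proof -
  have "x(j := y) \<in> space (PiM (insert j I) (\<lambda>_. P))"
    using measurable_space[OF measurable_component_update[OF assms(2,1)] assms(3)] .
  moreover have "{i \<in> insert j I. (x(j := y)) i \<in> S} =
      (if y \<in> S then insert j {i \<in> I. x i \<in> S} else {i \<in> I. x i \<in> S})"
    using assms(1) by auto
  ultimately show ?thesis
    using assms by (auto simp: hits_ge_def card_insert_disjoint split: split_indicator)
qed

lemma measure_hits_ge_insert:
  assumes "prob_space P" and S: "S \<in> sets P" and I: "finite I" "j \<notin> I"
  shows "measure (PiM (insert j I) (\<lambda>_. P)) (hits_ge P S (insert j I) (Suc m)) =
    measure P S * measure (PiM I (\<lambda>_. P)) (hits_ge P S I m) +
    (1 - measure P S) * measure (PiM I (\<lambda>_. P)) (hits_ge P S I (Suc m))"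
proof -
  interpret P: prob_space P by fact
  interpret product_sigma_finite "\<lambda>_. P"
    unfolding product_sigma_finite_def using P.sigma_finite_measure_axioms by simp
  interpret PI: prob_space "PiM I (\<lambda>_. P)" by (rule prob_space_PiM) (use P.prob_space_axioms in auto)
  interpret PJ: prob_space "PiM (insert j I) (\<lambda>_. P)" by (rule prob_space_PiM) (use P.prob_space_axioms in auto)
  let ?H = "hits_ge P S" and ?S' = "space P - S"
  have S': "?S' \<in> sets P" using S by auto
  have H_meas: "?H I k \<in> sets (PiM I (\<lambda>_. P))" "?H (insert j I) k \<in> sets (PiM (insert j I) (\<lambda>_. P))" for k
    using I S by (auto intro: sets_hits_ge)
  have "emeasure (PiM (insert j I) (\<lambda>_. P)) (?H (insert j I) (Suc m)) =
      (\<integral>\<^sup>+ x. (\<integral>\<^sup>+ y. indicator (?H (insert j I) (Suc m)) (x(j := y)) \<partial>P) \<partial>PiM I (\<lambda>_. P))"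
    using H_meas I by (subst product_nn_integral_insert[symmetric]) auto
  also have "\<dots> = (\<integral>\<^sup>+ x. emeasure P S * indicator (?H I m) x +
      emeasure P ?S' * indicator (?H I (Suc m)) x \<partial>PiM I (\<lambda>_. P))"
  proof (rule nn_integral_cong)
    fix x assume x: "x \<in> space (PiM I (\<lambda>_. P))"
    have "(\<integral>\<^sup>+ y. indicator (?H (insert j I) (Suc m)) (x(j := y)) \<partial>P) =
        (\<integral>\<^sup>+ y. indicator S y * indicator (?H I m) x + indicator ?S' y * indicator (?H I (Suc m)) x \<partial>P)"
      using x I by (intro nn_integral_cong) (simp add: indicator_hits_ge_insert)
    also have "\<dots> = (\<integral>\<^sup>+ y. indicator S y * indicator (?H I m) x \<partial>P) +
        (\<integral>\<^sup>+ y. indicator ?S' y * indicator (?H I (Suc m)) x \<partial>P)"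
      using S S' by (intro nn_integral_add) auto
    also have "\<dots> = emeasure P S * indicator (?H I m) x + emeasure P ?S' * indicator (?H I (Suc m)) x"
      using S S' by (simp add: nn_integral_multc)
    finally show "(\<integral>\<^sup>+ y. indicator (?H (insert j I) (Suc m)) (x(j := y)) \<partial>P) =
        emeasure P S * indicator (?H I m) x + emeasure P ?S' * indicator (?H I (Suc m)) x" .
  qed
  also have "\<dots> = emeasure P S * emeasure (PiM I (\<lambda>_. P)) (?H I m) +
      emeasure P ?S' * emeasure (PiM I (\<lambda>_. P)) (?H I (Suc m))"
    using H_meas by (simp add: nn_integral_add nn_integral_cmult)
  finally show ?thesis
    using S by (simp add: P.emeasure_eq_measure PI.emeasure_eq_measure PJ.emeasure_eq_measure
        P.prob_compl ennreal_mult'[symmetric] ennreal_plus[symmetric] del: ennreal_plus)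
qed

lemma measure_hits_ge_le:
  assumes "prob_space P" "S \<in> sets P" "measure P S \<le> p" "p \<le> 1" "finite I"
  shows "measure (PiM I (\<lambda>_. P)) (hits_ge P S I n) \<le> 1 - binomial_prob_less p (card I) n"
  using \<open>finite I\<close>
proof (induction I arbitrary: n rule: finite_induct)
  case empty
  interpret prob_space "PiM {} (\<lambda>_. P)" by (rule prob_space_PiM) (use assms in auto)
  show ?case
    by (cases n) (simp_all add: hits_ge_def binomial_prob_less_no_trials)
next
  case (insert j I)
  interpret P: prob_space P by fact
  interpret PI: prob_space "PiM I (\<lambda>_. P)" by (rule prob_space_PiM) (use assms in auto)
  interpret PJ: prob_space "PiM (insert j I) (\<lambda>_. P)" by (rule prob_space_PiM) (use assms in auto)
  show ?case
  proof (cases n)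
    case 0
    then show ?thesis by simp
  next
    case (Suc m)
    define s a1 a2 where "s = measure P S"
      and "a1 = measure (PiM I (\<lambda>_. P)) (hits_ge P S I m)"
      and "a2 = measure (PiM I (\<lambda>_. P)) (hits_ge P S I (Suc m))"
    have "a2 \<le> a1"
      unfolding a1_def a2_def using sets_hits_ge[OF insert.hyps(1) assms(2)]
      by (intro PI.finite_measure_mono) (auto simp: hits_ge_def)
    have "measure (PiM (insert j I) (\<lambda>_. P)) (hits_ge P S (insert j I) n) = s * a1 + (1 - s) * a2"
      unfolding Suc s_def a1_def a2_def using assms(1,2) insert.hyps by (rule measure_hits_ge_insert)
    also have "\<dots> = a2 + s * (a1 - a2)" by (simp add: algebra_simps)
    also have "\<dots> \<le> a2 + p * (a1 - a2)"
      using \<open>a2 \<le> a1\<close> assms(3) unfolding s_def by (simp add: mult_right_mono)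
    also have "\<dots> = p * a1 + (1 - p) * a2" by (simp add: algebra_simps)
    also have "\<dots> \<le> p * (1 - binomial_prob_less p (card I) m) + (1 - p) * (1 - binomial_prob_less p (card I) (Suc m))"
      unfolding a1_def a2_def using insert.IH assms(4) order_trans[OF measure_nonneg assms(3)]
      by (intro add_mono mult_left_mono) auto
    also have "\<dots> = 1 - binomial_prob_less p (card (insert j I)) n"
      using insert.hyps by (simp add: Suc binomial_prob_less_Suc_Suc algebra_simps)
    finally show ?thesis .
  qed
qed

section \<open>Split conformal calibration\<close>

lemma borel_measurable_measure_le_at:
  fixes s :: "'b \<Rightarrow> 'a \<Rightarrow> real"
  assumes "sigma_finite_measure P" and g: "g \<in> measurable M P"
    and s: "(\<lambda>z. s (fst z) (snd z)) \<in> borel_measurable (M \<Otimes>\<^sub>M P)"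
  shows "(\<lambda>\<omega>. measure P {e \<in> space P. s \<omega> e \<le> s \<omega> (g \<omega>)}) \<in> borel_measurable M"
proof -
  let ?Q = "{z \<in> space (M \<Otimes>\<^sub>M P). s (fst z) (snd z) \<le> s (fst z) (g (fst z))}"
  have "(\<lambda>z. (fst z, g (fst z))) \<in> measurable (M \<Otimes>\<^sub>M P) (M \<Otimes>\<^sub>M P)"
    using g by measurable
  from measurable_compose[OF this s]
  have "(\<lambda>z. s (fst z) (g (fst z))) \<in> borel_measurable (M \<Otimes>\<^sub>M P)" by simp
  then have "?Q \<in> sets (M \<Otimes>\<^sub>M P)"
    using s by measurable
  then have "(\<lambda>\<omega>. enn2real (emeasure P (Pair \<omega> -` ?Q))) \<in> borel_measurable M"
    by (intro borel_measurable_enn2real sigma_finite_measure.measurable_emeasure_Pair[OF assms(1)])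
  then show ?thesis
  proof (rule measurable_cong[THEN iffD1, rotated])
    fix \<omega> assume "\<omega> \<in> space M"
    then have "Pair \<omega> -` ?Q = {e \<in> space P. s \<omega> e \<le> s \<omega> (g \<omega>)}"
      by (auto simp: space_pair_measure)
    then show "enn2real (emeasure P (Pair \<omega> -` ?Q)) = measure P {e \<in> space P. s \<omega> e \<le> s \<omega> (g \<omega>)}"
      by (simp add: measure_def)
  qed
qed

lemma measure_PiM_le_fibres:
  assumes "prob_space P" "J \<inter> I = {}" "finite J" "finite I"
    and A: "A \<in> sets (PiM (J \<union> I) (\<lambda>_. P))" and "0 \<le> B"
    and fibre: "\<And>x. x \<in> space (PiM J (\<lambda>_. P)) \<Longrightarrow>
      (\<integral>\<^sup>+ y. indicator A (merge J I (x, y)) \<partial>PiM I (\<lambda>_. P)) \<le> ennreal B"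
  shows "measure (PiM (J \<union> I) (\<lambda>_. P)) A \<le> B"
proof -
  interpret P: prob_space P by fact
  interpret product_sigma_finite "\<lambda>_. P"
    unfolding product_sigma_finite_def using P.sigma_finite_measure_axioms by simp
  interpret PJ: prob_space "PiM J (\<lambda>_. P)" by (rule prob_space_PiM) (use assms(1) in auto)
  interpret PN: prob_space "PiM (J \<union> I) (\<lambda>_. P)" by (rule prob_space_PiM) (use assms(1) in auto)
  have "emeasure (PiM (J \<union> I) (\<lambda>_. P)) A =
      (\<integral>\<^sup>+ x. (\<integral>\<^sup>+ y. indicator A (merge J I (x, y)) \<partial>PiM I (\<lambda>_. P)) \<partial>PiM J (\<lambda>_. P))"
    using A by (simp add: product_nn_integral_fold[OF assms(2-4), symmetric])
  also have "\<dots> \<le> (\<integral>\<^sup>+ x. ennreal B \<partial>PiM J (\<lambda>_. P))"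
    using fibre by (intro nn_integral_mono) simp
  also have "\<dots> = ennreal B"
    by (simp add: PJ.emeasure_space_1)
  finally show ?thesis
    using \<open>0 \<le> B\<close> by (simp add: PN.emeasure_eq_measure)
qed

lemma measure_hits_ge_local_le:
  fixes S :: "('i \<Rightarrow> 'a) \<Rightarrow> 'a set" and n :: nat
  assumes "prob_space P" "finite N" "I \<subseteq> N" "c \<le> 1"
    and S: "\<And>\<omega>. S \<omega> \<in> sets P" "\<And>\<omega>. measure P (S \<omega>) \<le> c"
    and S_local: "\<And>\<omega> \<omega>'. (\<And>j. j \<in> N - I \<Longrightarrow> \<omega> j = \<omega>' j) \<Longrightarrow> S \<omega> = S \<omega>'"
    and H_meas: "{\<omega> \<in> space (PiM N (\<lambda>_. P)). n \<le> card {i \<in> I. \<omega> i \<in> S \<omega>}} \<in> sets (PiM N (\<lambda>_. P))"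
  shows "measure (PiM N (\<lambda>_. P)) {\<omega> \<in> space (PiM N (\<lambda>_. P)). n \<le> card {i \<in> I. \<omega> i \<in> S \<omega>}}
    \<le> 1 - binomial_prob_less c (card I) n"
proof -
  interpret PI: prob_space "PiM I (\<lambda>_. P)" by (rule prob_space_PiM) (use assms(1) in auto)
  define J where "J = N - I"
  have "finite I" "finite J" "J \<inter> I = {}" and N_eq: "N = J \<union> I"
    using \<open>finite N\<close> \<open>I \<subseteq> N\<close> finite_subset unfolding J_def by auto
  let ?H = "{\<omega> \<in> space (PiM (J \<union> I) (\<lambda>_. P)). n \<le> card {i \<in> I. \<omega> i \<in> S \<omega>}}"
  have hits_le: "measure (PiM I (\<lambda>_. P)) (hits_ge P (S x) I n) \<le> 1 - binomial_prob_less c (card I) n" for x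
    using assms(1) S \<open>c \<le> 1\<close> \<open>finite I\<close> by (rule measure_hits_ge_le)
  have "measure (PiM (J \<union> I) (\<lambda>_. P)) ?H \<le> 1 - binomial_prob_less c (card I) n"
  proof (rule measure_PiM_le_fibres[OF assms(1) \<open>J \<inter> I = {}\<close> \<open>finite J\<close> \<open>finite I\<close>])
    show "?H \<in> sets (PiM (J \<union> I) (\<lambda>_. P))" using H_meas unfolding N_eq .
    show "0 \<le> 1 - binomial_prob_less c (card I) n"
      using hits_le order_trans[OF measure_nonneg] by blast
    fix x assume x: "x \<in> space (PiM J (\<lambda>_. P))"
    have fibre: "merge J I (x, y) \<in> ?H \<longleftrightarrow> y \<in> hits_ge P (S x) I n" if y: "y \<in> space (PiM I (\<lambda>_. P))" for y
    proof -
      have "(x, y) \<in> space (PiM J (\<lambda>_. P) \<Otimes>\<^sub>M PiM I (\<lambda>_. P))"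
        using x y by (simp add: space_pair_measure)
      then have "merge J I (x, y) \<in> space (PiM (J \<union> I) (\<lambda>_. P))"
        by (rule measurable_space[OF measurable_merge])
      moreover have "S (merge J I (x, y)) = S x"
        by (rule S_local) (simp add: J_def merge_def)
      moreover have "merge J I (x, y) i = y i" if "i \<in> I" for i
        using that \<open>J \<inter> I = {}\<close> by (auto simp: merge_def)
      ultimately have "{i \<in> I. merge J I (x, y) i \<in> S (merge J I (x, y))} = {i \<in> I. y i \<in> S x}"
        by auto
      then show ?thesis
        using \<open>merge J I (x, y) \<in> space (PiM (J \<union> I) (\<lambda>_. P))\<close> y by (simp add: hits_ge_def)
    qed
    have "(\<integral>\<^sup>+ y. indicator ?H (merge J I (x, y)) \<partial>PiM I (\<lambda>_. P)) =
        (\<integral>\<^sup>+ y. indicator (hits_ge P (S x) I n) y \<partial>PiM I (\<lambda>_. P))"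
      by (intro nn_integral_cong) (simp only: indicator_def fibre)
    also have "\<dots> = emeasure (PiM I (\<lambda>_. P)) (hits_ge P (S x) I n)"
      using sets_hits_ge[OF \<open>finite I\<close> S(1)] by simp
    also have "\<dots> \<le> ennreal (1 - binomial_prob_less c (card I) n)"
      using hits_le by (simp add: PI.emeasure_eq_measure ennreal_leI)
    finally show "(\<integral>\<^sup>+ y. indicator ?H (merge J I (x, y)) \<partial>PiM I (\<lambda>_. P)) \<le>
        ennreal (1 - binomial_prob_less c (card I) n)" .
  qed
  then show ?thesis
    unfolding N_eq .
qed

lemma measure_calibration_failures_le:
  fixes s :: "('i \<Rightarrow> 'a) \<Rightarrow> 'a \<Rightarrow> real" and n :: nat
  assumes "prob_space P" and "finite N" "I \<subseteq> N" "0 \<le> c" "c \<le> 1"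
    and s_joint: "(\<lambda>z. s (fst z) (snd z)) \<in> borel_measurable (PiM N (\<lambda>_. P) \<Otimes>\<^sub>M P)"
    and s_meas: "\<And>\<omega>. s \<omega> \<in> borel_measurable P"
    and s_local: "\<And>\<omega> \<omega>'. (\<And>j. j \<in> N - I \<Longrightarrow> \<omega> j = \<omega>' j) \<Longrightarrow> s \<omega> = s \<omega>'"
  defines "Fail \<equiv> {\<omega> \<in> space (PiM N (\<lambda>_. P)).
      n \<le> card {i \<in> I. measure P {e \<in> space P. s \<omega> e \<le> s \<omega> (\<omega> i)} < c}}"
  shows "Fail \<in> sets (PiM N (\<lambda>_. P))"
    and "measure (PiM N (\<lambda>_. P)) Fail \<le> 1 - binomial_prob_less c (card I) n"
proof -
  interpret P: prob_space P by fact
  have "finite I" using \<open>finite N\<close> \<open>I \<subseteq> N\<close> finite_subset by blast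
  define rank where "rank \<omega> e = measure P {e' \<in> space P. s \<omega> e' \<le> s \<omega> e}" for \<omega> e
  have rank_meas: "(\<lambda>\<omega>. rank \<omega> (\<omega> i)) \<in> borel_measurable (PiM N (\<lambda>_. P))" if "i \<in> I" for i
    unfolding rank_def using that \<open>I \<subseteq> N\<close>
    by (intro borel_measurable_measure_le_at[OF P.sigma_finite_measure_axioms _ s_joint]
        measurable_component_singleton) auto
  show Fail_meas: "Fail \<in> sets (PiM N (\<lambda>_. P))"
    unfolding Fail_def rank_def[symmetric]
    by (rule sets_Collect_card_ge[OF \<open>finite I\<close>]) (use rank_meas in measurable)
  define S where "S \<omega> = {e \<in> space P. rank \<omega> e < c}" for \<omega>
  have Fail_eq: "Fail = {\<omega> \<in> space (PiM N (\<lambda>_. P)). n \<le> card {i \<in> I. \<omega> i \<in> S \<omega>}}"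
  proof -
    have "{i \<in> I. rank \<omega> (\<omega> i) < c} = {i \<in> I. \<omega> i \<in> S \<omega>}" if "\<omega> \<in> space (PiM N (\<lambda>_. P))" for \<omega>
      using that \<open>I \<subseteq> N\<close> by (auto simp: S_def space_PiM)
    then show ?thesis
      unfolding Fail_def rank_def[symmetric] by auto
  qed
  show "measure (PiM N (\<lambda>_. P)) Fail \<le> 1 - binomial_prob_less c (card I) n"
    unfolding Fail_eq
  proof (rule measure_hits_ge_local_le[OF assms(1-3,5)])
    show "S \<omega> \<in> sets P" "measure P (S \<omega>) \<le> c" for \<omega>
      unfolding S_def rank_def using measure_cdf_at_self_less_le[OF assms(1) s_meas \<open>0 \<le> c\<close>] by auto
    show "S \<omega> = S \<omega>'" if "\<And>j. j \<in> N - I \<Longrightarrow> \<omega> j = \<omega>' j" for \<omega> \<omega>'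
      unfolding S_def rank_def using s_local[OF that] by simp
    show "{\<omega> \<in> space (PiM N (\<lambda>_. P)). n \<le> card {i \<in> I. \<omega> i \<in> S \<omega>}} \<in> sets (PiM N (\<lambda>_. P))"
      using Fail_meas unfolding Fail_eq .
  qed
qed

lemma card_nth_sort_map_le:
  fixes f :: "'a::linorder \<Rightarrow> 'b::linorder"
  assumes "finite I" "k < card I"
  shows "Suc k \<le> card {i \<in> I. f i \<le> sort (map f (sorted_list_of_set I)) ! k}"
proof -
  define s where "s = sort (map f (sorted_list_of_set I))"
  have len: "length s = card I" unfolding s_def using assms(1) by simp
  have "\<forall>v\<in>set (take (Suc k) s). v \<le> s ! k"
    using assms(2) len by (auto simp: in_set_conv_nth s_def intro!: sorted_nth_mono)
  then have "Suc k = length (filter (\<lambda>v. v \<le> s ! k) (take (Suc k) s))"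
    using assms(2) len by simp
  also have "\<dots> \<le> length (filter (\<lambda>v. v \<le> s ! k) s)"
    by (metis append_take_drop_id filter_append length_append le_add1)
  also have "\<dots> = length (filter (\<lambda>i. f i \<le> s ! k) (sorted_list_of_set I))"
    unfolding s_def by (simp add: filter_sort filter_map comp_def)
  also have "\<dots> = card {i \<in> I. f i \<le> s ! k}"
    using assms(1) by (simp add: distinct_length_filter Int_def conj_commute)
  finally show ?thesis unfolding s_def .
qed

lemma measure_sublevel_nth_sort_ge:
  fixes f :: "'a \<Rightarrow> real" and x :: "'i::linorder \<Rightarrow> 'a"
  assumes "prob_space P" "f \<in> borel_measurable P" "finite I" "k < card I"
    and few_failures: "card {i \<in> I. measure P {e \<in> space P. f e \<le> f (x i)} < c} \<le> k"
  shows "c \<le> measure P {e \<in> space P. f e \<le> sort (map (\<lambda>i. f (x i)) (sorted_list_of_set I)) ! k}"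
proof (rule ccontr)
  interpret prob_space P by fact
  define \<alpha> where "\<alpha> = sort (map (\<lambda>i. f (x i)) (sorted_list_of_set I)) ! k"
  assume small: "\<not> c \<le> measure P {e \<in> space P. f e \<le> \<alpha>}"
  have "{i \<in> I. f (x i) \<le> \<alpha>} \<subseteq> {i \<in> I. measure P {e \<in> space P. f e \<le> f (x i)} < c}"
  proof safe
    fix i assume "f (x i) \<le> \<alpha>"
    then have "measure P {e \<in> space P. f e \<le> f (x i)} \<le> measure P {e \<in> space P. f e \<le> \<alpha>}"
      using assms(2) by (intro finite_measure_mono) auto
    then show "measure P {e \<in> space P. f e \<le> f (x i)} < c"
      using small by linarith
  qed
  then have "card {i \<in> I. f (x i) \<le> \<alpha>} \<le> card {i \<in> I. measure P {e \<in> space P. f e \<le> f (x i)} < c}"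
    using \<open>finite I\<close> by (intro card_mono) auto
  then have "card {i \<in> I. f (x i) \<le> \<alpha>} \<le> k"
    using few_failures by linarith
  moreover have "Suc k \<le> card {i \<in> I. f (x i) \<le> \<alpha>}"
    unfolding \<alpha>_def using \<open>finite I\<close> \<open>k < card I\<close> by (rule card_nth_sort_map_le)
  ultimately show False by simp
qed

lemma split_conformal_coverage:
  fixes s :: "('i::linorder \<Rightarrow> 'a) \<Rightarrow> 'a \<Rightarrow> real"
  assumes "prob_space P" and "finite N" "I \<subseteq> N" "0 \<le> c" "c \<le> 1" "k < card I"
    and "(\<lambda>z. s (fst z) (snd z)) \<in> borel_measurable (PiM N (\<lambda>_. P) \<Otimes>\<^sub>M P)"
    and s_meas: "\<And>\<omega>. s \<omega> \<in> borel_measurable P"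
    and "\<And>\<omega> \<omega>'. (\<And>j. j \<in> N - I \<Longrightarrow> \<omega> j = \<omega>' j) \<Longrightarrow> s \<omega> = s \<omega>'"
  shows "prob_atleast (PiM N (\<lambda>_. P))
    {\<omega> \<in> space (PiM N (\<lambda>_. P)).
      c \<le> measure P {e \<in> space P. s \<omega> e \<le> sort (map (\<lambda>i. s \<omega> (\<omega> i)) (sorted_list_of_set I)) ! k}}
    (binomial_prob_less c (card I) (Suc k))"
proof -
  interpret PN: prob_space "PiM N (\<lambda>_. P)" by (rule prob_space_PiM) (use assms(1) in auto)
  define Fail where "Fail = {\<omega> \<in> space (PiM N (\<lambda>_. P)).
      Suc k \<le> card {i \<in> I. measure P {e \<in> space P. s \<omega> e \<le> s \<omega> (\<omega> i)} < c}}"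
  have Fail: "Fail \<in> sets (PiM N (\<lambda>_. P))"
      "measure (PiM N (\<lambda>_. P)) Fail \<le> 1 - binomial_prob_less c (card I) (Suc k)"
    using measure_calibration_failures_le[OF assms(1-5,7-9), where n="Suc k"]
    unfolding Fail_def by auto
  have "finite I" using assms(2,3) finite_subset by blast
  show ?thesis
    unfolding prob_atleast_def
  proof (intro bexI conjI)
    show "space (PiM N (\<lambda>_. P)) - Fail \<subseteq> {\<omega> \<in> space (PiM N (\<lambda>_. P)).
      c \<le> measure P {e \<in> space P. s \<omega> e \<le> sort (map (\<lambda>i. s \<omega> (\<omega> i)) (sorted_list_of_set I)) ! k}}"
    proof
      fix \<omega> assume \<omega>: "\<omega> \<in> space (PiM N (\<lambda>_. P)) - Fail"
      then have "card {i \<in> I. measure P {e \<in> space P. s \<omega> e \<le> s \<omega> (\<omega> i)} < c} \<le> k"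
        unfolding Fail_def by auto
      then have "c \<le> measure P {e \<in> space P. s \<omega> e \<le> sort (map (\<lambda>i. s \<omega> (\<omega> i)) (sorted_list_of_set I)) ! k}"
        by (rule measure_sublevel_nth_sort_ge[OF assms(1) s_meas \<open>finite I\<close> \<open>k < card I\<close>])
      with \<omega> show "\<omega> \<in> {\<omega> \<in> space (PiM N (\<lambda>_. P)).
        c \<le> measure P {e \<in> space P. s \<omega> e \<le> sort (map (\<lambda>i. s \<omega> (\<omega> i)) (sorted_list_of_set I)) ! k}}"
        by blast
    qed
    show "binomial_prob_less c (card I) (Suc k) \<le> measure (PiM N (\<lambda>_. P)) (space (PiM N (\<lambda>_. P)) - Fail)"
      using PN.prob_compl[OF Fail(1)] Fail(2) by simp
  qed (use Fail(1) in auto)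
qed

section \<open>Chance-constrained and robust unit commitment\<close>

lemma continuous_on_matrix_vector_mult [continuous_intros]:
  fixes M :: "real^'n^'m"
  shows "continuous_on S f \<Longrightarrow> continuous_on S (\<lambda>z. M *v f z)"
  using continuous_on_compose2[OF matrix_vector_mult_linear_continuous_on[of UNIV M]] by auto

lemma closed_Collect_vec_le:
  fixes f g :: "'a::topological_space \<Rightarrow> real^'n"
  assumes "continuous_on UNIV f" "continuous_on UNIV g"
  shows "closed {z. f z \<le> g z}"
proof -
  have "closed {z. \<forall>i. f z $ i \<le> g z $ i}"
    by (intro closed_Collect_all closed_Collect_le continuous_on_component assms)
  then show ?thesis by (simp add: less_eq_vec_def)
qed

lemma sets_borel_fst_image_closed:
  fixes S :: "('a::{heine_borel,real_normed_vector} \<times> 'b::{heine_borel,real_normed_vector}) set"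
  assumes "closed S"
  shows "fst ` S \<in> sets borel"
proof -
  have "fst ` S = (\<Union>j::nat. fst ` (S \<inter> cball 0 (real j)))"
    using real_arch_simple by (fastforce simp: dist_norm)
  moreover have "compact (fst ` (S \<inter> cball 0 (real j)))" for j :: nat
    using assms by (intro compact_continuous_image continuous_on_fst continuous_on_id closed_Int_compact) auto
  ultimately show ?thesis
    by (simp add: borel_closed compact_imp_closed sets.countable_UN)
qed

text \<open>Approximately optimal second-stage solutions y exist for every level above the value,
  so the sublevel set is a countable intersection of projections of closed sets.\<close>
lemma sets_Qval_le:
  "{u. Qval A B D E F x u \<le> ereal \<eta>} \<in> sets borel"
proof -
  define K where "K k = {z. B *v x + D *v fst z + E \<le> A *v snd z \<and> F \<bullet> snd z \<le> \<eta> + inverse (real (Suc k))}"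
    for k :: nat
  have closed_K: "closed (K k)" for k
    unfolding K_def Collect_conj_eq
    by (intro closed_Int closed_Collect_vec_le closed_Collect_le continuous_intros)
  have "{u. Qval A B D E F x u \<le> ereal \<eta>} = (\<Inter>k. fst ` K k)"
  proof (intro equalityI subsetI)
    fix u assume "u \<in> {u. Qval A B D E F x u \<le> ereal \<eta>}"
    then have "Qval A B D E F x u < ereal (\<eta> + inverse (real (Suc k)))" for k
      by (simp add: le_less_trans)
    then have "\<exists>y. (u, y) \<in> K k" for k
      unfolding Qval_def Yset_def K_def INF_less_iff by (fastforce intro: less_imp_le)
    then show "u \<in> (\<Inter>k. fst ` K k)" by force
  next
    fix u assume u: "u \<in> (\<Inter>k. fst ` K k)"
    have "Qval A B D E F x u \<le> ereal \<eta> + ereal e" if "0 < e" for e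
    proof -
      obtain k where k: "inverse (real (Suc k)) < e"
        using reals_Archimedean[OF \<open>0 < e\<close>] by blast
      obtain y where "(u, y) \<in> K k" using u by force
      then have "Qval A B D E F x u \<le> ereal (F \<bullet> y)" "F \<bullet> y \<le> \<eta> + e"
        using k unfolding Qval_def Yset_def K_def by (auto intro: INF_lower)
      then show ?thesis by (simp add: order_trans)
    qed
    then show "u \<in> {u. Qval A B D E F x u \<le> ereal \<eta>}"
      by (simp add: ereal_le_epsilon2)
  qed
  moreover have "(\<Inter>k. fst ` K k) \<in> sets borel"
    using closed_K by (intro sets.countable_INT) (auto intro: sets_borel_fst_image_closed)
  ultimately show ?thesis by simp
qed

lemma O_cc_le_O_x:
  assumes "x \<in> X"
  shows "O_cc P uhat X A B C D E F \<epsilon> \<le> O_x P uhat A B C D E F \<epsilon> x"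
proof -
  have "O_cc P uhat X A B C D E F \<epsilon> - ereal (C \<bullet> x) \<le>
      (INF \<eta>\<in>{\<eta>. 1 - \<epsilon> \<le> measure P {e \<in> space P. Qval A B D E F x (uhat + e) \<le> ereal \<eta>}}. ereal \<eta>)"
  proof (rule INF_greatest)
    fix \<eta> assume "\<eta> \<in> {\<eta>. 1 - \<epsilon> \<le> measure P {e \<in> space P. Qval A B D E F x (uhat + e) \<le> ereal \<eta>}}"
    then have "O_cc P uhat X A B C D E F \<epsilon> \<le> ereal (C \<bullet> x + \<eta>)"
      unfolding O_cc_def using assms by (intro Inf_lower) blast
    then show "O_cc P uhat X A B C D E F \<epsilon> - ereal (C \<bullet> x) \<le> ereal \<eta>"
      by (simp add: ereal_minus_le add.commute)
  qed
  then show ?thesis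
    unfolding O_x_def by (simp add: ereal_minus_le add.commute)
qed

text \<open>Every upper bound of the worst-case second-stage cost over U is a feasible level eta
  of the chance constraint.\<close>
lemma O_x_le_robval:
  assumes "prob_space P" and P_borel: "sets P = sets borel"
    and U_prob: "1 - \<epsilon> \<le> measure P {e \<in> space P. uhat + e \<in> U}"
  shows "O_x P uhat A B C D E F \<epsilon> x \<le> robval A B C D E F U x"
proof -
  interpret prob_space P by fact
  have "(INF \<eta>\<in>{\<eta>. 1 - \<epsilon> \<le> measure P {e \<in> space P. Qval A B D E F x (uhat + e) \<le> ereal \<eta>}}. ereal \<eta>)
      \<le> (SUP u\<in>U. Qval A B D E F x u)"
  proof (rule ereal_le_real)
    fix r assume r: "(SUP u\<in>U. Qval A B D E F x u) \<le> ereal r"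
    let ?T = "{e \<in> space P. Qval A B D E F x (uhat + e) \<le> ereal r}"
    have "(\<lambda>e. uhat + e) \<in> measurable P borel"
      unfolding measurable_cong_sets[OF P_borel refl] by (intro borel_measurable_continuous_onI continuous_intros)
    from measurable_sets[OF this sets_Qval_le]
    have T_meas: "?T \<in> sets P" by (simp add: vimage_def Int_def conj_commute)
    have "{e \<in> space P. uhat + e \<in> U} \<subseteq> ?T"
    proof safe
      fix e assume "uhat + e \<in> U"
      then have "Qval A B D E F x (uhat + e) \<le> (SUP u\<in>U. Qval A B D E F x u)"
        by (rule SUP_upper)
      then show "Qval A B D E F x (uhat + e) \<le> ereal r"
        using r by (rule order_trans)
    qed
    then have "measure P {e \<in> space P. uhat + e \<in> U} \<le> measure P ?T"
      using T_meas by (rule finite_measure_mono)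
    then have "1 - \<epsilon> \<le> measure P ?T"
      using U_prob by linarith
    then show "(INF \<eta>\<in>{\<eta>. 1 - \<epsilon> \<le> measure P {e \<in> space P. Qval A B D E F x (uhat + e) \<le> ereal \<eta>}}. ereal \<eta>)
        \<le> ereal r"
      by (intro INF_lower) simp
  qed
  then show ?thesis
    unfolding O_x_def robval_def by (rule add_left_mono)
qed

lemma O_cc_le_O_x_le_O_rob:
  assumes "prob_space P" "sets P = sets borel"
    and U0_full: "measure P {e \<in> space P. uhat + e \<in> U0} = 1"
    and Ev: "Ev \<in> sets P" "1 - \<epsilon> \<le> measure P Ev"
    and x0_opt: "x0 \<in> X" "\<And>x. x \<in> X \<Longrightarrow>
      robval A B C D E F {u \<in> U0. u - uhat \<in> Ev} x0 \<le> robval A B C D E F {u \<in> U0. u - uhat \<in> Ev} x"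
  shows "O_cc P uhat X A B C D E F \<epsilon> \<le> O_x P uhat A B C D E F \<epsilon> x0 \<and>
    O_x P uhat A B C D E F \<epsilon> x0 \<le> O_rob X A B C D E F {u \<in> U0. u - uhat \<in> Ev}"
proof
  interpret prob_space P by fact
  let ?U1 = "{u \<in> U0. u - uhat \<in> Ev}"
  show "O_cc P uhat X A B C D E F \<epsilon> \<le> O_x P uhat A B C D E F \<epsilon> x0"
    using x0_opt(1) by (rule O_cc_le_O_x)
  have U0_meas: "{e \<in> space P. uhat + e \<in> U0} \<in> sets P"
    using U0_full measure_notin_sets[of _ P] by (metis zero_neq_one)
  have shifted_U1: "{e \<in> space P. uhat + e \<in> ?U1} = {e \<in> space P. uhat + e \<in> U0} \<inter> Ev"
    using sets.sets_into_space[OF Ev(1)] by auto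
  have "measure P {e \<in> space P. uhat + e \<in> ?U1} = measure P Ev"
    unfolding shifted_U1
  proof (rule measure_eq_AE)
    show "AE e in P. e \<in> {e \<in> space P. uhat + e \<in> U0} \<inter> Ev \<longleftrightarrow> e \<in> Ev"
      using AE_prob_1[OF U0_full] by eventually_elim blast
  qed (use U0_meas Ev(1) in auto)
  then have "1 - \<epsilon> \<le> measure P {e \<in> space P. uhat + e \<in> ?U1}"
    using Ev(2) by simp
  then have "O_x P uhat A B C D E F \<epsilon> x0 \<le> robval A B C D E F ?U1 x0"
    by (rule O_x_le_robval[OF assms(1,2)])
  also have "\<dots> \<le> O_rob X A B C D E F ?U1"
    unfolding O_rob_def using x0_opt(2) by (rule INF_greatest)
  finally show "O_x P uhat A B C D E F \<epsilon> x0 \<le> O_rob X A B C D E F ?U1" .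
qed

section \<open>Coverage of the data-driven uncertainty set\<close>

lemma nstar_bounds:
  assumes "0 < \<epsilon>" "\<epsilon> < 1" "0 < \<delta>" "\<delta> < 1" "log (1 - \<epsilon>) \<delta> \<le> real K"
  shows "1 \<le> nstar K \<epsilon> \<delta>" "nstar K \<epsilon> \<delta> \<le> K"
    and "1 - \<delta> \<le> binomial_prob_less (1 - \<epsilon>) K (nstar K \<epsilon> \<delta>)"
proof -
  have nstar_eq: "nstar K \<epsilon> \<delta> = (LEAST n. 1 - \<delta> \<le> binomial_prob_less (1 - \<epsilon>) K n)"
    unfolding nstar_def binomial_prob_less_def by simp
  have "(1 - \<epsilon>) ^ K = (1 - \<epsilon>) powr real K"
    using assms(1,2) by (simp add: powr_realpow)
  also have "\<dots> \<le> (1 - \<epsilon>) powr log (1 - \<epsilon>) \<delta>"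
    using assms by (intro powr_mono') auto
  also have "\<dots> = \<delta>"
    using assms by simp
  finally have K_ok: "1 - \<delta> \<le> binomial_prob_less (1 - \<epsilon>) K K"
    by (simp add: binomial_prob_less_self)
  show "nstar K \<epsilon> \<delta> \<le> K"
    unfolding nstar_eq by (rule Least_le) (rule K_ok)
  show n_ok: "1 - \<delta> \<le> binomial_prob_less (1 - \<epsilon>) K (nstar K \<epsilon> \<delta>)"
    unfolding nstar_eq by (rule LeastI) (rule K_ok)
  show "1 \<le> nstar K \<epsilon> \<delta>"
    using n_ok \<open>\<delta> < 1\<close> by (cases "nstar K \<epsilon> \<delta>") auto
qed

lemma smean_cong:
  "(\<And>i. i \<in> I \<Longrightarrow> w i = w' i) \<Longrightarrow> smean w I = smean w' I"
  unfolding smean_def by (simp cong: sum.cong)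

lemma scov_cong:
  "(\<And>i. i \<in> I \<Longrightarrow> w i = w' i) \<Longrightarrow> scov w I = scov w' I"
  unfolding scov_def by (simp add: smean_cong[of I w w'] cong: sum.cong)

lemma borel_measurable_mahalanobis_score:
  fixes P :: "(real^'n) measure"
  assumes P_borel: "sets P = sets borel" and "I \<subseteq> N"
  shows "(\<lambda>z. mdist (smean (fst z) I) (scov (fst z) I) (snd z))
    \<in> borel_measurable (PiM N (\<lambda>_. P) \<Otimes>\<^sub>M P)"
proof -
  have into_P: "measurable M P = borel_measurable M" for M :: "'b measure"
    by (rule measurable_cong_sets[OF refl P_borel])
  have "(\<lambda>z. fst z i) \<in> borel_measurable (PiM N (\<lambda>_. P) \<Otimes>\<^sub>M P)" if "i \<in> I" for i
  proof -
    have "i \<in> N" using that \<open>I \<subseteq> N\<close> by blast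
    then show ?thesis unfolding into_P[symmetric] by measurable
  qed
  moreover have "snd \<in> borel_measurable (PiM N (\<lambda>_. P) \<Otimes>\<^sub>M P)"
    unfolding into_P[symmetric] by (rule measurable_snd)
  ultimately show ?thesis
    by (intro borel_measurable_mdist borel_measurable_smean borel_measurable_scov) auto
qed

lemma sets_Eset:
  fixes P :: "(real^'n) measure"
  assumes "sets P = sets borel"
  shows "Eset \<omega> I1 I2 \<epsilon> \<delta> \<in> sets P"
proof -
  have "(\<lambda>e. mdist (smean \<omega> I1) (scov \<omega> I1) e) \<in> borel_measurable borel"
    by (intro borel_measurable_mdist borel_measurable_const measurable_ident_sets refl)
  then have "{e \<in> space borel. mdist (smean \<omega> I1) (scov \<omega> I1) e \<le> alpha_thr \<omega> I1 I2 \<epsilon> \<delta>} \<in> sets borel"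
    by measurable
  then show ?thesis
    unfolding Eset_def assms by simp
qed

lemma prob_atleast_coverage_Eset:
  fixes P :: "(real^'n) measure"
  assumes P_prob: "prob_space P" and P_borel: "sets P = sets borel"
    and eps: "0 < \<epsilon>" "\<epsilon> < 1" and delta: "0 < \<delta>" "\<delta> < 1"
    and "finite N" "I1 \<subseteq> N" "I2 \<subseteq> N" "I1 \<inter> I2 = {}"
    and N2_large: "log (1 - \<epsilon>) \<delta> \<le> real (card I2)"
  shows "prob_atleast (PiM N (\<lambda>_. P))
    {\<omega> \<in> space (PiM N (\<lambda>_. P)). 1 - \<epsilon> \<le> measure P (Eset \<omega> I1 I2 \<epsilon> \<delta>)} (1 - \<delta>)"
proof -
  define s where "s \<omega> e = mdist (smean \<omega> I1) (scov \<omega> I1) e" for \<omega> :: "nat \<Rightarrow> real^'n" and e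
  define n where "n = nstar (card I2) \<epsilon> \<delta>"
  have n: "Suc (n - 1) = n" "n - 1 < card I2" "1 - \<delta> \<le> binomial_prob_less (1 - \<epsilon>) (card I2) n"
    unfolding n_def using nstar_bounds[OF eps delta N2_large] by auto
  have s_meas: "s \<omega> \<in> borel_measurable P" for \<omega>
    unfolding s_def measurable_cong_sets[OF P_borel refl]
    by (intro borel_measurable_mdist borel_measurable_const measurable_ident_sets refl)
  have s_local: "s \<omega> = s \<omega>'" if "\<And>j. j \<in> N - I2 \<Longrightarrow> \<omega> j = \<omega>' j" for \<omega> \<omega>'
    using that assms(8,10) unfolding s_def by (intro ext smean_cong scov_cong arg_cong2[where f=mdist]) blast+
  have Eset_eq: "Eset \<omega> I1 I2 \<epsilon> \<delta> =
      {e \<in> space P. s \<omega> e \<le> sort (map (\<lambda>i. s \<omega> (\<omega> i)) (sorted_list_of_set I2)) ! (n - 1)}" for \<omega>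
    using sets_eq_imp_space_eq[OF P_borel] unfolding Eset_def alpha_thr_def s_def n_def by simp
  have "prob_atleast (PiM N (\<lambda>_. P))
      {\<omega> \<in> space (PiM N (\<lambda>_. P)). 1 - \<epsilon> \<le> measure P (Eset \<omega> I1 I2 \<epsilon> \<delta>)}
      (binomial_prob_less (1 - \<epsilon>) (card I2) (Suc (n - 1)))"
    unfolding Eset_eq
    using eps n(2) borel_measurable_mahalanobis_score[OF P_borel \<open>I1 \<subseteq> N\<close>] unfolding s_def[symmetric]
    by (intro split_conformal_coverage P_prob s_meas s_local assms(7,9)) auto
  then obtain G where "G \<in> sets (PiM N (\<lambda>_. P))" "binomial_prob_less (1 - \<epsilon>) (card I2) n \<le> measure (PiM N (\<lambda>_. P)) G"
      "G \<subseteq> {\<omega> \<in> space (PiM N (\<lambda>_. P)). 1 - \<epsilon> \<le> measure P (Eset \<omega> I1 I2 \<epsilon> \<delta>)}"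
    unfolding prob_atleast_def n(1) by blast
  then show ?thesis
    unfolding prob_atleast_def using n(3) by (intro bexI[of _ G]) auto
qed

theorem theorem1:
  fixes P :: "(real^'n) measure"
    and N :: nat and I1 I2 :: "nat set"
    and \<epsilon> \<delta> :: real
    and uhat Ulow Uup :: "real^'n"
    and X :: "(real^'k) set"
    and A :: "real^'m^'r" and B :: "real^'k^'r" and C :: "real^'k"
    and D :: "real^'n^'r" and E :: "real^'r" and F :: "real^'m"
    and x0 :: "(nat \<Rightarrow> real^'n) \<Rightarrow> real^'k"
  defines "PN \<equiv> PiM {..<N} (\<lambda>_. P)"
    and "U0 \<equiv> {u. Ulow \<le> u \<and> u \<le> Uup}"
  assumes P_prob: "prob_space P"
    and P_borel: "sets P = sets borel"
    and P_cont: "absolutely_continuous lborel P"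
    and U0_full: "measure P {e \<in> space P. uhat + e \<in> U0} = 1"
    and eps: "0 < \<epsilon>" "\<epsilon> < 1"
    and delta: "0 < \<delta>" "\<delta> < 1"
    and I1_sub: "I1 \<subseteq> {..<N}" and I2_sub: "I2 \<subseteq> {..<N}"
    and disj: "I1 \<inter> I2 = {}"
    and N2_large: "real (card I2) \<ge> log (1 - \<epsilon>) \<delta>"
    and Sigma_inv: "AE \<omega> in PN. invertible (scov \<omega> I1)"
    and x0_opt: "\<And>\<omega>. \<omega> \<in> space PN \<Longrightarrow> x0 \<omega> \<in> X \<and>
        (\<forall>x\<in>X. robval A B C D E F {u \<in> U0. u - uhat \<in> Eset \<omega> I1 I2 \<epsilon> \<delta>} (x0 \<omega>)
               \<le> robval A B C D E F {u \<in> U0. u - uhat \<in> Eset \<omega> I1 I2 \<epsilon> \<delta>} x)"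
  shows "prob_atleast PN {\<omega> \<in> space PN. measure P (Eset \<omega> I1 I2 \<epsilon> \<delta>) \<ge> 1 - \<epsilon>} (1 - \<delta>) \<and>
         prob_atleast PN {\<omega> \<in> space PN.
           O_cc P uhat X A B C D E F \<epsilon> \<le> O_x P uhat A B C D E F \<epsilon> (x0 \<omega>) \<and>
           O_x P uhat A B C D E F \<epsilon> (x0 \<omega>)
             \<le> O_rob X A B C D E F {u \<in> U0. u - uhat \<in> Eset \<omega> I1 I2 \<epsilon> \<delta>}} (1 - \<delta>)"
proof -
  obtain G where G: "G \<in> sets PN" "1 - \<delta> \<le> measure PN G"
    and covered: "G \<subseteq> {\<omega> \<in> space PN. 1 - \<epsilon> \<le> measure P (Eset \<omega> I1 I2 \<epsilon> \<delta>)}"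
    using prob_atleast_coverage_Eset[OF P_prob P_borel eps delta finite_lessThan I1_sub I2_sub disj N2_large]
    unfolding prob_atleast_def PN_def by auto
  have "G \<subseteq> {\<omega> \<in> space PN.
      O_cc P uhat X A B C D E F \<epsilon> \<le> O_x P uhat A B C D E F \<epsilon> (x0 \<omega>) \<and>
      O_x P uhat A B C D E F \<epsilon> (x0 \<omega>) \<le> O_rob X A B C D E F {u \<in> U0. u - uhat \<in> Eset \<omega> I1 I2 \<epsilon> \<delta>}}"
  proof
    fix \<omega> assume "\<omega> \<in> G"
    with covered have \<omega>: "\<omega> \<in> space PN" "1 - \<epsilon> \<le> measure P (Eset \<omega> I1 I2 \<epsilon> \<delta>)" by auto
    from x0_opt[OF \<omega>(1)] have "x0 \<omega> \<in> X" "\<And>x. x \<in> X \<Longrightarrow>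
        robval A B C D E F {u \<in> U0. u - uhat \<in> Eset \<omega> I1 I2 \<epsilon> \<delta>} (x0 \<omega>)
        \<le> robval A B C D E F {u \<in> U0. u - uhat \<in> Eset \<omega> I1 I2 \<epsilon> \<delta>} x"
      by auto
    from O_cc_le_O_x_le_O_rob[OF P_prob P_borel U0_full sets_Eset[OF P_borel] \<omega>(2) this] \<omega>(1)
    show "\<omega> \<in> {\<omega> \<in> space PN.
      O_cc P uhat X A B C D E F \<epsilon> \<le> O_x P uhat A B C D E F \<epsilon> (x0 \<omega>) \<and>
      O_x P uhat A B C D E F \<epsilon> (x0 \<omega>) \<le> O_rob X A B C D E F {u \<in> U0. u - uhat \<in> Eset \<omega> I1 I2 \<epsilon> \<delta>}}"
      by blast
  qed
  then show ?thesis
    unfolding prob_atleast_def using G covered by blast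
qed

end
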